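(* For every $N$ there exists a positive integer $n$ with at least $N$ distinct prime factors such that $\gamma(X_n)\le\gamma_t(X_n)\le g(n)-2$.
   Context: For a positive integer $n$, $X_n$ is the graph on $\{0,\dots,n-1\}$ with $a,b$ adjacent iff $\gcd(a-b,n)=1$. The Jacobsthal function $g(n)$ is the least positive integer $m$ such that every set of $m$ consecutive integers contains an integer coprime to $n$. $\gamma(G)$ is the domination number (minimum size of a set $S$ such that every vertex is in $S$ or adjacent to a vertex of $S$); $\gamma_t(G)$ is the total domination number (minimum size of a set $S$ such that every vertex of $G$ is adjacent to some vertex of $S$). *)

theory Defs
  imports "HOL-Number_Theory.Number_Theory"
begin

text \<open>The unitary Cayley graph X_n on vertex set {0,...,n-1}: a, b adjacent iff gcd(a-b, n) = 1.\<close>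
definition Xadj :: "nat \<Rightarrow> nat \<Rightarrow> nat \<Rightarrow> bool" where
  "Xadj n a b \<longleftrightarrow> gcd (int a - int b) (int n) = 1"

definition dominating_X :: "nat \<Rightarrow> nat set \<Rightarrow> bool" where
  "dominating_X n S \<longleftrightarrow> S \<subseteq> {0..<n} \<and>
     (\<forall>v\<in>{0..<n}. v \<in> S \<or> (\<exists>s\<in>S. Xadj n v s))"

definition total_dominating_X :: "nat \<Rightarrow> nat set \<Rightarrow> bool" where
  "total_dominating_X n S \<longleftrightarrow> S \<subseteq> {0..<n} \<and>
     (\<forall>v\<in>{0..<n}. \<exists>s\<in>S. Xadj n v s)"

definition domination_number_X :: "nat \<Rightarrow> nat" where
  "domination_number_X n = (LEAST k. \<exists>S. dominating_X n S \<and> card S = k)"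

definition total_domination_number_X :: "nat \<Rightarrow> nat" where
  "total_domination_number_X n = (LEAST k. \<exists>S. total_dominating_X n S \<and> card S = k)"

definition jacobsthal :: "nat \<Rightarrow> nat" where
  "jacobsthal n = (LEAST m. m > 0 \<and> (\<forall>a::int. \<exists>x\<in>{a..<a + int m}. coprime x (int n)))"

end

theory Submission
  imports Defs
begin

text \<open>
  Take \<open>n = 30 q\<^sub>1\<cdots>q\<^sub>k\<close> with \<open>k = 8N + 3\<close> primes \<open>q\<^sub>i > 30N + 30\<close>.
  The set \<open>S = [0, 30N) \<union> (30N + R30)\<close> has \<open>30N + 16\<close> elements, and for every
  vertex \<open>v\<close> at least \<open>8N + 4\<close> elements \<open>s \<in> S\<close> make \<open>v - s\<close> a unit mod 30.
  Since \<open>S\<close> is shorter than every \<open>q\<^sub>i\<close>, each \<open>q\<^sub>i\<close> divides \<open>v - s\<close> for at most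
  one \<open>s \<in> S\<close>, so some \<open>s\<close> is adjacent to \<open>v\<close>: \<open>S\<close> is totally dominating.
  On the other hand, \<open>30N + 17\<close> consecutive integers ending at a residue 6 mod 30
  contain exactly \<open>8N + 3\<close> units mod 30, and the Chinese remainder theorem places the
  window so that each of them is divisible by its own \<open>q\<^sub>i\<close>; hence \<open>g(n) \<ge> 30N + 18\<close>.
\<close>

lemma coprime_prime_right_iff:
  fixes p :: "'a :: factorial_semiring_gcd"
  assumes "prime p"
  shows "coprime x p \<longleftrightarrow> \<not> p dvd x"
proof
  show "\<not> p dvd x" if "coprime x p"
    using coprime_common_divisor[OF that _ dvd_refl] assms not_prime_unit by blast
  show "coprime x p" if "\<not> p dvd x"
    using prime_imp_coprime[OF assms that] by (simp add: coprime_commute)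
qed

lemma coprime_prod_right_iff:
  fixes x :: "'a :: semiring_gcd"
  assumes "finite A"
  shows "coprime x (\<Prod>i\<in>A. f i) \<longleftrightarrow> (\<forall>i\<in>A. coprime x (f i))"
  using assms by (induction A rule: finite_induct) simp_all

lemma coprime_mult_prod_primes_iff:
  fixes x :: int and Q :: "nat set"
  assumes "finite Q" and "\<forall>q\<in>Q. prime q"
  shows "coprime x (int (m * \<Prod>Q)) \<longleftrightarrow> coprime x (int m) \<and> (\<forall>q\<in>Q. \<not> int q dvd x)"
proof -
  have "coprime x (int q) \<longleftrightarrow> \<not> int q dvd x" if "q \<in> Q" for q
    using assms(2) that by (intro coprime_prime_right_iff) simp
  then show ?thesis
    unfolding of_nat_mult of_nat_prod coprime_mult_right_iff coprime_prod_right_iff[OF assms(1)]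
    by simp
qed

lemma mult_prod_primes_gt_0:
  fixes Q :: "nat set"
  assumes "finite Q" and "\<forall>q\<in>Q. prime q" and "m > 0"
  shows "m * \<Prod>Q > 0"
  using assms by (simp add: prime_gt_0_nat prod_pos)

lemma coprime_cong_iff:
  fixes a b :: "'a :: {unique_euclidean_semiring, euclidean_semiring_gcd}"
  assumes "[a = b] (mod m)"
  shows "coprime a m \<longleftrightarrow> coprime b m"
  using cong_imp_coprime[OF assms] cong_imp_coprime[OF cong_sym[OF assms]] by blast

lemma coprime_diff_cong_iff:
  assumes "[v = v'] (mod m)" and "[s = s'] (mod m)"
  shows "coprime (int v - int s) (int m) \<longleftrightarrow> coprime (int v' - int s') (int m)"
proof (rule coprime_cong_iff)
  show "[int v - int s = int v' - int s'] (mod int m)"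
    using assms by (intro cong_diff) (simp_all add: cong_int_iff)
qed

lemma prime_coprime_if_less:
  fixes q m :: nat
  assumes "prime q" and "0 < m" and "m < q"
  shows "coprime q m"
  using assms by (intro prime_imp_coprime) (auto dest: dvd_imp_le)

lemma card_filter_upt_add:
  fixes a b :: nat
  shows "card {x \<in> {0..<a + b}. P x} = card {x \<in> {0..<a}. P x} + card {x \<in> {0..<b}. P (a + x)}"
proof -
  have "{x \<in> {0..<a + b}. P x} = {x \<in> {0..<a}. P x} \<union> (+) a ` {x \<in> {0..<b}. P (a + x)}"
  proof (intro equalityI subsetI)
    fix x
    assume x: "x \<in> {x \<in> {0..<a + b}. P x}"
    show "x \<in> {x \<in> {0..<a}. P x} \<union> (+) a ` {x \<in> {0..<b}. P (a + x)}"
    proof (cases "x < a")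
      case False
      then have "x = a + (x - a)" and "x - a \<in> {x \<in> {0..<b}. P (a + x)}"
        using x by auto
      then show ?thesis
        by blast
    qed (use x in simp)
  qed auto
  moreover have "card ({x \<in> {0..<a}. P x} \<union> (+) a ` {x \<in> {0..<b}. P (a + x)}) =
      card {x \<in> {0..<a}. P x} + card ((+) a ` {x \<in> {0..<b}. P (a + x)})"
    by (rule card_Un_disjoint) auto
  moreover have "card ((+) a ` {x \<in> {0..<b}. P (a + x)}) = card {x \<in> {0..<b}. P (a + x)}"
    by (rule card_image) simp
  ultimately show ?thesis
    by simp
qed

lemma card_filter_upt_periodic:
  fixes m :: nat
  assumes "\<And>x. P (m + x) = P x"
  shows "card {x \<in> {0..<c * m + l}. P x} = c * card {x \<in> {0..<m}. P x} + card {x \<in> {0..<l}. P x}"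
proof (induction c)
  case (Suc c)
  have "card {x \<in> {0..<Suc c * m + l}. P x} = card {x \<in> {0..<m}. P x} + card {x \<in> {0..<c * m + l}. P x}"
    using card_filter_upt_add[where a = m and b = "c * m + l" and P = P] by (simp add: assms add.assoc)
  with Suc.IH show ?case by simp
qed simp

lemma card_dvd_diff_le:
  fixes S Q :: "nat set" and w :: int
  assumes "finite Q" and "S \<subseteq> {0..<B}" and "\<forall>q\<in>Q. B \<le> q"
  shows "card {s \<in> S. \<exists>q\<in>Q. int q dvd w - int s} \<le> card Q"
proof -
  have finite_S: "finite S"
    using assms(2) finite_subset by blast
  have "card {s \<in> S. int q dvd w - int s} \<le> 1" if "q \<in> Q" for q
  proof -
    have "s = s'" if "s \<in> S" "s' \<in> S" "int q dvd w - int s" "int q dvd w - int s'" for s s'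
    proof (rule ccontr)
      assume "s \<noteq> s'"
      have "int q dvd int s - int s'"
        using dvd_diff[OF that(4,3)] by simp
      then have "int q \<le> \<bar>int s - int s'\<bar>"
        using dvd_imp_le_int[of "int s - int s'" "int q"] \<open>s \<noteq> s'\<close> by simp
      moreover have "s < B" "s' < B"
        using that(1,2) assms(2) by auto
      ultimately show False
        using assms(3) \<open>q \<in> Q\<close> by force
    qed
    then show ?thesis
      using finite_S unfolding One_nat_def by (subst card_le_Suc0_iff_eq) auto
  qed
  then have "card (\<Union>q\<in>Q. {s \<in> S. int q dvd w - int s}) \<le> card Q"
    using card_UN_le[OF assms(1), of "\<lambda>q. {s \<in> S. int q dvd w - int s}"]
      sum_mono[of Q "\<lambda>q. card {s \<in> S. int q dvd w - int s}" "\<lambda>_. 1"]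
    by simp
  moreover have "{s \<in> S. \<exists>q\<in>Q. int q dvd w - int s} = (\<Union>q\<in>Q. {s \<in> S. int q dvd w - int s})"
    by blast
  ultimately show ?thesis
    by simp
qed

lemma exists_primes_greater:
  "\<exists>Q :: nat set. finite Q \<and> card Q = k \<and> (\<forall>q\<in>Q. prime q \<and> B < q)"
proof -
  have "{p :: nat. prime p \<and> B < p} = {p. prime p} - {..B}"
    by auto
  then have "infinite {p :: nat. prime p \<and> B < p}"
    using primes_infinite by (simp add: Diff_infinite_finite)
  then obtain Q where "finite Q" "card Q = k" "Q \<subseteq> {p. prime p \<and> B < p}"
    using infinite_arbitrarily_large by blast
  then show ?thesis
    by blast
qed

lemma primes_subset_prime_factors_mult_prod:
  fixes Q :: "nat set"
  assumes "finite Q" and "\<forall>q\<in>Q. prime q" and "m > 0"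
  shows "Q \<subseteq> prime_factors (m * \<Prod>Q)"
proof
  fix q
  assume "q \<in> Q"
  then have "q dvd m * \<Prod>Q"
    using assms(1) by (simp add: dvd_prod_eqI)
  moreover have "m * \<Prod>Q \<noteq> 0"
    using mult_prod_primes_gt_0[OF assms] by simp
  ultimately show "q \<in> prime_factors (m * \<Prod>Q)"
    using assms(2) \<open>q \<in> Q\<close> by (simp add: in_prime_factors_iff)
qed

lemma total_dominating_X_mult_prod_primes:
  fixes Q S :: "nat set"
  assumes Q: "finite Q" "\<forall>q\<in>Q. prime q \<and> B \<le> q"
    and S: "S \<subseteq> {0..<B}" and "Q \<noteq> {}" "m > 0"
    and many: "\<And>v. card Q < card {s \<in> S. coprime (int v - int s) (int m)}"
  shows "total_dominating_X (m * \<Prod>Q) S"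
  unfolding total_dominating_X_def
proof (intro conjI ballI)
  obtain q where "q \<in> Q"
    using \<open>Q \<noteq> {}\<close> by blast
  have "B \<le> q"
    using Q(2) \<open>q \<in> Q\<close> by blast
  also have "q dvd m * \<Prod>Q"
    using Q(1) \<open>q \<in> Q\<close> by (simp add: dvd_prod_eqI)
  then have "q \<le> m * \<Prod>Q"
    using Q \<open>m > 0\<close> mult_prod_primes_gt_0 by (intro dvd_imp_le) auto
  finally show "S \<subseteq> {0..<m * \<Prod>Q}"
    using S by auto
  fix v
  let ?C = "{s \<in> S. coprime (int v - int s) (int m)}"
  let ?K = "{s \<in> S. \<exists>q\<in>Q. int q dvd int v - int s}"
  have "card ?K \<le> card Q"
    using card_dvd_diff_le[OF Q(1) S(1)] Q(2) by blast
  with many[of v] have "\<not> card ?C \<le> card ?K"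
    by linarith
  moreover have "finite ?K"
    using finite_subset[OF S(1)] by simp
  ultimately obtain s where "s \<in> ?C" "s \<notin> ?K"
    using card_mono[of ?K ?C] by blast
  moreover have "\<forall>q\<in>Q. prime q"
    using Q(2) by blast
  ultimately have "s \<in> S" and "coprime (int v - int s) (int (m * \<Prod>Q))"
    using coprime_mult_prod_primes_iff[OF Q(1)] by auto
  then show "\<exists>s\<in>S. Xadj (m * \<Prod>Q) v s"
    unfolding Xadj_def by (auto simp: coprime_iff_gcd_eq_1)
qed

lemma total_dominating_X_imp_dominating_X:
  "total_dominating_X n S \<Longrightarrow> dominating_X n S"
  unfolding total_dominating_X_def dominating_X_def by blast

lemma total_domination_number_X_le_card:
  "total_dominating_X n S \<Longrightarrow> total_domination_number_X n \<le> card S"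
  unfolding total_domination_number_X_def by (rule Least_le) blast

lemma domination_number_X_le_total_domination_number_X:
  assumes "total_dominating_X n S"
  shows "domination_number_X n \<le> total_domination_number_X n"
proof -
  have "\<exists>S0. total_dominating_X n S0 \<and> card S0 = total_domination_number_X n"
    unfolding total_domination_number_X_def by (rule LeastI_ex) (use assms in blast)
  then show ?thesis
    unfolding domination_number_X_def
    by (intro Least_le) (blast dest: total_dominating_X_imp_dominating_X)
qed

lemma jacobsthal_covers:
  assumes "n > 0"
  shows "\<exists>x\<in>{a..<a + int (jacobsthal n)}. coprime x (int n)"
proof -
  have "\<exists>x\<in>{b..<b + int n}. coprime x (int n)" for b
  proof
    let ?x = "b + (1 - b) mod int n"
    show "?x \<in> {b..<b + int n}"
      using assms by simp
    have "[?x = 1] (mod int n)"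
      unfolding cong_def by (simp add: mod_add_right_eq)
    from coprime_cong_iff[OF this] show "coprime ?x (int n)"
      by simp
  qed
  with assms have "n > 0 \<and> (\<forall>b. \<exists>x\<in>{b..<b + int n}. coprime x (int n))"
    by blast
  then have "jacobsthal n > 0 \<and> (\<forall>b. \<exists>x\<in>{b..<b + int (jacobsthal n)}. coprime x (int n))"
    unfolding jacobsthal_def by (rule LeastI)
  then show ?thesis
    by blast
qed

lemma jacobsthal_gt:
  assumes "n > 0" and "\<forall>x\<in>{a..<a + int L}. \<not> coprime x (int n)"
  shows "L < jacobsthal n"
proof (rule ccontr)
  assume "\<not> L < jacobsthal n"
  then have "{a..<a + int (jacobsthal n)} \<subseteq> {a..<a + int L}"
    by auto
  with jacobsthal_covers[OF assms(1), of a] assms(2) show False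
    by blast
qed

lemma exists_cong_with_prime_divisors:
  fixes Q W :: "nat set" and m r :: nat
  assumes Q: "finite Q" "\<forall>q\<in>Q. prime q \<and> coprime q m"
    and W: "finite W" "card W \<le> card Q"
  shows "\<exists>a. [a = r] (mod m) \<and> (\<forall>d\<in>W. \<exists>q\<in>Q. int q dvd int a - int d)"
proof -
  obtain g where g: "g ` W \<subseteq> Q" "inj_on g W"
    using card_le_inj[OF W(1) Q(1) W(2)] by blast
  have "m \<notin> Q"
    using Q(2) not_prime_1 by fastforce
  define u where "u i = (if i = m then r else inv_into W g i)" for i
  have "\<exists>a. \<forall>i\<in>insert m Q. [a = u i] (mod id i)"
  proof (rule chinese_remainder_nat)
    show "\<forall>i\<in>insert m Q. \<forall>j\<in>insert m Q. i \<noteq> j \<longrightarrow> coprime (id i) (id j)"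
      using Q(2) by (auto simp: primes_coprime coprime_commute)
  qed (use Q(1) in simp)
  then obtain a where a: "\<forall>i\<in>insert m Q. [a = u i] (mod i)"
    by auto
  show ?thesis
  proof (intro exI conjI ballI)
    show "[a = r] (mod m)"
      using a by (simp add: u_def)
    fix d
    assume "d \<in> W"
    then have "g d \<in> Q" and "u (g d) = d"
      using g \<open>m \<notin> Q\<close> by (auto simp: u_def)
    with a have "[a = d] (mod g d)"
      by (metis insert_iff)
    then have "[int a = int d] (mod int (g d))"
      by (simp add: cong_int_iff)
    then show "\<exists>q\<in>Q. int q dvd int a - int d"
      using \<open>g d \<in> Q\<close> cong_iff_dvd_diff by blast
  qed
qed

lemma jacobsthal_mult_prod_primes_gt:
  fixes Q :: "nat set" and m r L :: nat
  assumes Q: "finite Q" "\<forall>q\<in>Q. prime q \<and> coprime q m" and "m > 0"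
    and few: "card {d \<in> {0..<L}. coprime (int r - int d) (int m)} \<le> card Q"
  shows "L < jacobsthal (m * \<Prod>Q)"
proof -
  let ?n = "m * \<Prod>Q"
  have primes: "\<forall>q\<in>Q. prime q"
    using Q(2) by blast
  obtain a where a: "[a = r] (mod m)"
    and sieved: "\<forall>d\<in>{d \<in> {0..<L}. coprime (int r - int d) (int m)}. \<exists>q\<in>Q. int q dvd int a - int d"
    using exists_cong_with_prime_divisors[OF Q _ few, where r = r] by auto
  have not_coprime: "\<not> coprime (int a - int d) (int ?n)" if "d < L" for d
  proof (cases "coprime (int r - int d) (int m)")
    case True
    then show ?thesis
      using sieved that coprime_mult_prod_primes_iff[OF Q(1) primes] by auto
  next
    case False
    have "[int a - int d = int r - int d] (mod int m)"
      using a by (simp add: cong_diff cong_int_iff)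
    with False show ?thesis
      using coprime_cong_iff coprime_mult_prod_primes_iff[OF Q(1) primes] by blast
  qed
  have "\<forall>x\<in>{int a - int L + 1..<int a - int L + 1 + int L}. \<not> coprime x (int ?n)"
  proof
    fix x
    assume "x \<in> {int a - int L + 1..<int a - int L + 1 + int L}"
    then have "x = int a - int (nat (int a - x))" and "nat (int a - x) < L"
      by auto
    then show "\<not> coprime x (int ?n)"
      using not_coprime by metis
  qed
  moreover have "?n > 0"
    using mult_prod_primes_gt_0[OF Q(1) primes \<open>m > 0\<close>] .
  ultimately show ?thesis
    by (rule jacobsthal_gt[rotated])
qed

definition R30 :: "nat set" where
  "R30 = {0, 1, 4, 7, 8, 10, 12, 15, 21, 22, 23, 24, 25, 26, 27, 29}"

lemma card_coprime_diff_30: "card {s \<in> {0..<30}. coprime (int v - int s) (30::int)} = 8"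
proof -
  have "\<forall>w\<in>{0..<30}. card {s \<in> {0..<30}. coprime (int w - int s) (30::int)} = 8"
    unfolding atLeastLessThan_upt set_filter[symmetric] by code_simp
  moreover have "coprime (int v - int s) 30 \<longleftrightarrow> coprime (int (v mod 30) - int s) 30" for s
    using coprime_diff_cong_iff[of v "v mod 30" 30 s s] by (simp add: cong_def)
  ultimately show ?thesis
    by simp
qed

lemma card_coprime_diff_R30: "4 \<le> card {r \<in> R30. coprime (int v - int r) (30::int)}"
proof -
  have "\<forall>w\<in>{0..<30}. 4 \<le> card {r \<in> R30. coprime (int w - int r) (30::int)}"
    unfolding atLeastLessThan_upt R30_def by code_simp
  moreover have "coprime (int v - int s) 30 \<longleftrightarrow> coprime (int (v mod 30) - int s) 30" for s
    using coprime_diff_cong_iff[of v "v mod 30" 30 s s] by (simp add: cong_def)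
  ultimately show ?thesis
    by simp
qed

text \<open>The residues \<open>6, 5, \<dots>, -10\<close> mod 30 contain only the units \<open>1, -1, -7\<close>.\<close>

lemma card_coprime_window_30: "card {d \<in> {0..<30 * c + 17}. coprime (6 - int d) (30::int)} = 8 * c + 3"
proof -
  have "card {d \<in> {0..<17}. coprime (6 - int d) (30::int)} = 3"
    unfolding atLeastLessThan_upt set_filter[symmetric] by code_simp
  moreover have "coprime (6 - int (30 + d)) 30 \<longleftrightarrow> coprime (6 - int d) (30::int)" for d
    using coprime_diff_cong_iff[of 6 6 30 "30 + d" d] by (simp add: cong_def)
  ultimately show ?thesis
    using card_filter_upt_periodic[of "\<lambda>d. coprime (6 - int d) (30::int)" 30 c 17]
      card_coprime_diff_30[of 6] by (simp add: mult.commute)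
qed

definition dominating_block :: "nat \<Rightarrow> nat set" where
  "dominating_block c = {0..<30 * c} \<union> (+) (30 * c) ` R30"

lemma dominating_block_subset: "dominating_block c \<subseteq> {0..<30 * c + 30}"
  unfolding dominating_block_def R30_def by auto

lemma card_dominating_block: "card (dominating_block c) = 30 * c + 16"
proof -
  have "card (dominating_block c) = card {0..<30 * c} + card ((+) (30 * c) ` R30)"
    unfolding dominating_block_def by (rule card_Un_disjoint) (auto simp: R30_def)
  also have "card ((+) (30 * c) ` R30) = card R30"
    by (rule card_image) simp
  finally show ?thesis
    by (simp add: R30_def)
qed

lemma card_coprime_diff_dominating_block:
  "8 * c + 4 \<le> card {s \<in> dominating_block c. coprime (int v - int s) (30::int)}"
proof -
  let ?P = "\<lambda>s. coprime (int v - int s) (30::int)"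
  have shift: "?P (30 * k + s) \<longleftrightarrow> ?P s" for k s
    using coprime_diff_cong_iff[of v v 30 "30 * k + s" s] by (simp add: cong_def)
  have "card {s \<in> {0..<30 * c}. ?P s} = 8 * c"
    using card_filter_upt_periodic[of ?P 30 c 0] shift[of 1] card_coprime_diff_30[of v]
    by (simp add: mult.commute)
  moreover have "card ((+) (30 * c) ` {r \<in> R30. ?P r}) = card {r \<in> R30. ?P r}"
    by (rule card_image) simp
  moreover have "{s \<in> dominating_block c. ?P s} = {s \<in> {0..<30 * c}. ?P s} \<union> (+) (30 * c) ` {r \<in> R30. ?P r}"
    unfolding dominating_block_def using shift by auto
  moreover have "card ({s \<in> {0..<30 * c}. ?P s} \<union> (+) (30 * c) ` {r \<in> R30. ?P r}) =
      card {s \<in> {0..<30 * c}. ?P s} + card ((+) (30 * c) ` {r \<in> R30. ?P r})"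
    by (rule card_Un_disjoint) (auto simp: R30_def)
  ultimately show ?thesis
    using card_coprime_diff_R30[of v] by simp
qed

theorem corollary3p2:
  fixes N :: nat
  shows "\<exists>n::nat. n > 0 \<and> card (prime_factors n) \<ge> N \<and>
           domination_number_X n \<le> total_domination_number_X n \<and>
           int (total_domination_number_X n) \<le> int (jacobsthal n) - 2"
proof -
  obtain Q :: "nat set" where Q: "finite Q" "card Q = 8 * N + 3" "\<forall>q\<in>Q. prime q \<and> 30 * N + 30 < q"
    using exists_primes_greater by blast
  then have primes: "\<forall>q\<in>Q. prime q" and "Q \<noteq> {}"
    by auto
  let ?n = "30 * \<Prod>Q"
  have "card Q < card {s \<in> dominating_block N. coprime (int v - int s) (int 30)}" for v
    using card_coprime_diff_dominating_block[of N v] Q(2) by simp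
  then have tdom: "total_dominating_X ?n (dominating_block N)"
    using Q dominating_block_subset \<open>Q \<noteq> {}\<close>
    by (intro total_dominating_X_mult_prod_primes[where B = "30 * N + 30"]) (auto simp: less_imp_le)
  have "domination_number_X ?n \<le> total_domination_number_X ?n"
    using tdom by (rule domination_number_X_le_total_domination_number_X)
  moreover have "total_domination_number_X ?n \<le> 30 * N + 16"
    using total_domination_number_X_le_card[OF tdom] by (simp add: card_dominating_block)
  moreover have "\<forall>q\<in>Q. prime q \<and> coprime q 30"
    using Q(3) by (auto intro!: prime_coprime_if_less)
  then have "30 * N + 17 < jacobsthal ?n"
    using Q(1,2) card_coprime_window_30[of N]
    by (intro jacobsthal_mult_prod_primes_gt[where r = 6]) auto
  moreover have "N \<le> card (prime_factors ?n)"
    using card_mono[OF _ primes_subset_prime_factors_mult_prod[OF Q(1) primes, of 30]] Q(2) by simp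
  moreover have "?n > 0"
    using mult_prod_primes_gt_0[OF Q(1) primes, of 30] by simp
  ultimately show ?thesis
    by (intro exI[of _ ?n]) auto
qed

end
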